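(* Let $G$ be a finite nilpotent group having at least two distinct non-abelian Sylow subgroups (for two distinct primes). Let $H$ be a non-abelian group such that $|Z(G)|\geq |Z(H)|$ and $\Gamma_G\cong\Gamma_H$. Then $|G|=|H|$.
   Context: For a non-abelian group $G$ with center $Z(G)$, the non-commuting graph $\Gamma_G$ is the simple graph with vertex set $G\setminus Z(G)$ in which two distinct vertices $x,y$ are adjacent if and only if $xy\neq yx$. *)

theory Defs
  imports "HOL-Algebra.Algebra" "HOL-Computational_Algebra.Primes"
begin

definition center :: "('a, 'b) monoid_scheme \<Rightarrow> 'a set" where
  "center G = {z \<in> carrier G. \<forall>x \<in> carrier G. z \<otimes>\<^bsub>G\<^esub> x = x \<otimes>\<^bsub>G\<^esub> z}"

text \<open>Upper central series: Z_0 = 1, Z_(i+1) = elements whose commutators with all of G lie in Z_i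
  (i.e. Z_(i+1)/Z_i = Z(G/Z_i)).\<close>
fun upper_central :: "('a, 'b) monoid_scheme \<Rightarrow> nat \<Rightarrow> 'a set" where
  "upper_central G 0 = {\<one>\<^bsub>G\<^esub>}"
| "upper_central G (Suc n) = {x \<in> carrier G. \<forall>y \<in> carrier G.
     x \<otimes>\<^bsub>G\<^esub> y \<otimes>\<^bsub>G\<^esub> inv\<^bsub>G\<^esub> x \<otimes>\<^bsub>G\<^esub> inv\<^bsub>G\<^esub> y \<in> upper_central G n}"

definition nilpotent_group :: "('a, 'b) monoid_scheme \<Rightarrow> bool" where
  "nilpotent_group G \<longleftrightarrow> group G \<and> (\<exists>n. upper_central G n = carrier G)"

definition non_abelian_set :: "('a, 'b) monoid_scheme \<Rightarrow> 'a set \<Rightarrow> bool" where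
  "non_abelian_set G S \<longleftrightarrow> (\<exists>x \<in> S. \<exists>y \<in> S. x \<otimes>\<^bsub>G\<^esub> y \<noteq> y \<otimes>\<^bsub>G\<^esub> x)"

abbreviation non_abelian :: "('a, 'b) monoid_scheme \<Rightarrow> bool" where
  "non_abelian G \<equiv> non_abelian_set G (carrier G)"

definition sylow_subgroup :: "('a, 'b) monoid_scheme \<Rightarrow> nat \<Rightarrow> 'a set \<Rightarrow> bool" where
  "sylow_subgroup G p P \<longleftrightarrow> Factorial_Ring.prime p \<and> subgroup P G \<and>
     card P = p ^ multiplicity p (order G)"

definition nc_adj :: "('a, 'b) monoid_scheme \<Rightarrow> 'a \<Rightarrow> 'a \<Rightarrow> bool" where
  "nc_adj G x y \<longleftrightarrow> x \<in> carrier G - center G \<and> y \<in> carrier G - center G \<and> x \<noteq> y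
     \<and> x \<otimes>\<^bsub>G\<^esub> y \<noteq> y \<otimes>\<^bsub>G\<^esub> x"

definition nc_graph_iso :: "('a, 'b) monoid_scheme \<Rightarrow> ('c, 'd) monoid_scheme \<Rightarrow> bool" where
  "nc_graph_iso G H \<longleftrightarrow> (\<exists>f. bij_betw f (carrier G - center G) (carrier H - center H) \<and>
     (\<forall>x \<in> carrier G - center G. \<forall>y \<in> carrier G - center G.
        nc_adj G x y \<longleftrightarrow> nc_adj H (f x) (f y)))"

end

theory Submission
  imports Defs
begin

text \<open>
  In a nilpotent group elements of coprime orders commute: in the quotient by a term of the
  upper central series their commutator is central, and a central commutator of elements
  of coprime orders is trivial. Hence if \<open>x\<close> lies in a non-abelian Sylow \<open>p\<close>-subgroup and
  \<open>u\<close> in a non-abelian Sylow \<open>q\<close>-subgroup, splitting every \<open>g\<close> into its \<open>p'\<close>-part and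
  its \<open>p\<close>-part shows \<open>C(x) C(u) = G\<close>, so \<open>|C(x)| |C(u)| = |C(x) \<inter> C(u)| |G|\<close>.

  A non-commuting graph isomorphism preserves \<open>|C(S)| - |Z|\<close> for every set \<open>S\<close> of
  non-central vertices (including \<open>S = {}\<close>, where \<open>C(S)\<close> is the whole group). With
  \<open>d = |Z(G)| - |Z(H)| \<ge> 0\<close>, the inequality \<open>|C(f x)| |C(f u)| \<le> |C(f x) \<inter> C(f u)| |H|\<close>
  in \<open>H\<close> becomes \<open>d (|C(x) \<inter> C(u)| + |G| - |C(x)| - |C(u)|) \<le> 0\<close>, while the bracket is
  \<open>(|G| - |C(x)|) (|G| - |C(u)|) / |G| > 0\<close>. So \<open>d = 0\<close> and \<open>|H| = |G|\<close>.
\<close>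

lemma (in group) inv_mult_cancel_left:
  "a \<in> carrier G \<Longrightarrow> z \<in> carrier G \<Longrightarrow> inv a \<otimes> (a \<otimes> z) = z"
  by (simp add: m_assoc[symmetric])

lemma (in group) mult_inv_cancel_left:
  "a \<in> carrier G \<Longrightarrow> z \<in> carrier G \<Longrightarrow> a \<otimes> (inv a \<otimes> z) = z"
  by (simp add: m_assoc[symmetric])

lemma (in group) commute_of_commutator_eq_one:
  assumes "a \<in> carrier G" "b \<in> carrier G" "a \<otimes> b \<otimes> inv a \<otimes> inv b = \<one>"
  shows "a \<otimes> b = b \<otimes> a"
proof -
  have "a \<otimes> b = a \<otimes> b \<otimes> inv a \<otimes> inv b \<otimes> (b \<otimes> a)"
    using assms(1,2) by (simp add: m_assoc inv_mult_cancel_left)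
  then show ?thesis using assms by simp
qed

lemma (in group) conj_pow_eq_central_pow:
  assumes U: "U \<in> carrier G" and V: "V \<in> carrier G" and W: "W \<in> carrier G"
    and central: "\<And>g. g \<in> carrier G \<Longrightarrow> W \<otimes> g = g \<otimes> W"
    and conj: "U \<otimes> V \<otimes> inv U = W \<otimes> V"
  shows "U [^] (k::nat) \<otimes> V \<otimes> inv (U [^] k) = W [^] k \<otimes> V"
proof (induction k)
  case 0
  then show ?case using V by simp
next
  case (Suc k)
  have "U [^] Suc k \<otimes> V \<otimes> inv (U [^] Suc k) = U [^] k \<otimes> (U \<otimes> V \<otimes> inv U) \<otimes> inv (U [^] k)"
    using U V by (simp add: inv_mult_group m_assoc)
  also have "\<dots> = W \<otimes> (U [^] k \<otimes> V \<otimes> inv (U [^] k))"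
    using U V W central[of "U [^] k"] by (simp add: conj m_assoc[symmetric])
  also have "\<dots> = W [^] Suc k \<otimes> V"
    using W V central[of "W [^] k"] by (simp add: Suc m_assoc[symmetric])
  finally show ?case .
qed

lemma (in group) eq_one_of_pow_coprime:
  assumes "c \<in> carrier G" "c [^] (m::nat) = \<one>" "c [^] (n::nat) = \<one>" "coprime m n"
  shows "c = \<one>"
proof -
  have "ord c dvd gcd m n" using assms(1-3) by (simp add: pow_eq_id)
  then show ?thesis using assms(1,4) ord_eq_1 by simp
qed

lemma (in group) central_commutator_eq_one:
  assumes x: "x \<in> carrier G" and y: "y \<in> carrier G"
    and xm: "x [^] (m::nat) = \<one>" and yn: "y [^] (n::nat) = \<one>" and "coprime m n"
    and central: "\<And>g. g \<in> carrier G \<Longrightarrow>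
       x \<otimes> y \<otimes> inv x \<otimes> inv y \<otimes> g = g \<otimes> (x \<otimes> y \<otimes> inv x \<otimes> inv y)"
  shows "x \<otimes> y \<otimes> inv x \<otimes> inv y = \<one>"
proof -
  define c where "c = x \<otimes> y \<otimes> inv x \<otimes> inv y"
  have c: "c \<in> carrier G" using x y by (simp add: c_def)
  have c_central: "c \<otimes> g = g \<otimes> c" if "g \<in> carrier G" for g
    using central[OF that] by (simp add: c_def)
  have inv_c_central: "inv c \<otimes> g = g \<otimes> inv c" if g: "g \<in> carrier G" for g
  proof -
    have "inv c \<otimes> (g \<otimes> c) \<otimes> inv c = inv c \<otimes> (c \<otimes> g) \<otimes> inv c" by (simp add: c_central[OF g])
    then show ?thesis using c g by (simp add: m_assoc inv_mult_cancel_left)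
  qed
  have "x \<otimes> y \<otimes> inv x = c \<otimes> y" using x y by (simp add: c_def m_assoc)
  from conj_pow_eq_central_pow[OF x y c c_central this, of m]
  have "c [^] m = \<one>" using xm y c by simp
  moreover have "y \<otimes> x \<otimes> inv y = inv c \<otimes> x"
    using x y by (simp add: c_def m_assoc inv_mult_group)
  from conj_pow_eq_central_pow[OF y x inv_closed[OF c] inv_c_central this, of n]
  have "inv (c [^] n) = \<one>" using yn x c by (simp add: nat_pow_inv)
  then have "c [^] n = \<one>" using c by (metis inv_inv inv_one nat_pow_closed)
  ultimately show ?thesis using eq_one_of_pow_coprime[OF c _ _ \<open>coprime m n\<close>] by (simp add: c_def)
qed

lemma (in group) subgroup_upper_central_Suc:
  assumes "upper_central G i \<lhd> G"
  shows "subgroup (upper_central G (Suc i)) G"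
proof -
  let ?N = "upper_central G i"
  interpret N: normal ?N G by (rule assms)
  show ?thesis
  proof (rule subgroupI)
    show "upper_central G (Suc i) \<noteq> {}" by (auto intro!: exI[of _ \<one>] N.one_closed)
  next
    fix a assume a: "a \<in> upper_central G (Suc i)"
    have "inv a \<otimes> y \<otimes> inv (inv a) \<otimes> inv y \<in> ?N" if y: "y \<in> carrier G" for y
    proof -
      have "a \<in> carrier G" and "a \<otimes> y \<otimes> inv a \<otimes> inv y \<in> ?N" using a y by auto
      then have "inv a \<otimes> inv (a \<otimes> y \<otimes> inv a \<otimes> inv y) \<otimes> inv (inv a) \<in> ?N"
        by (intro N.inv_op_closed2 N.m_inv_closed) simp_all
      moreover have "inv a \<otimes> inv (a \<otimes> y \<otimes> inv a \<otimes> inv y) \<otimes> inv (inv a)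
          = inv a \<otimes> y \<otimes> inv (inv a) \<otimes> inv y"
        using a y by (simp add: inv_mult_group m_assoc inv_mult_cancel_left mult_inv_cancel_left)
      ultimately show ?thesis by simp
    qed
    then show "inv a \<in> upper_central G (Suc i)" using a by auto
  next
    fix a b assume a: "a \<in> upper_central G (Suc i)" and b: "b \<in> upper_central G (Suc i)"
    have "a \<otimes> b \<otimes> y \<otimes> inv (a \<otimes> b) \<otimes> inv y \<in> ?N" if y: "y \<in> carrier G" for y
    proof -
      have "a \<otimes> (b \<otimes> y \<otimes> inv b \<otimes> inv y) \<otimes> inv a \<in> ?N"
        using a b y N.inv_op_closed2 by auto
      moreover have "a \<otimes> y \<otimes> inv a \<otimes> inv y \<in> ?N" using a y by auto
      ultimately have "a \<otimes> (b \<otimes> y \<otimes> inv b \<otimes> inv y) \<otimes> inv a \<otimes> (a \<otimes> y \<otimes> inv a \<otimes> inv y) \<in> ?N"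
        by (rule N.m_closed)
      moreover have "a \<otimes> (b \<otimes> y \<otimes> inv b \<otimes> inv y) \<otimes> inv a \<otimes> (a \<otimes> y \<otimes> inv a \<otimes> inv y)
          = a \<otimes> b \<otimes> y \<otimes> inv (a \<otimes> b) \<otimes> inv y"
        using a b y by (simp add: inv_mult_group m_assoc inv_mult_cancel_left mult_inv_cancel_left)
      ultimately show ?thesis by simp
    qed
    then show "a \<otimes> b \<in> upper_central G (Suc i)" using a b by auto
  qed auto
qed

lemma (in group) normal_upper_central: "upper_central G i \<lhd> G"
proof (induction i)
  case 0
  then show ?case by (simp add: one_is_normal)
next
  case (Suc i)
  let ?N = "upper_central G i"
  interpret N: normal ?N G by (rule Suc)
  show ?case
  proof (rule normal_inv_iff[THEN iffD2], intro conjI ballI subgroup_upper_central_Suc[OF Suc])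
    fix g a assume g: "g \<in> carrier G" and a: "a \<in> upper_central G (Suc i)"
    have "g \<otimes> a \<otimes> inv g \<otimes> y \<otimes> inv (g \<otimes> a \<otimes> inv g) \<otimes> inv y \<in> ?N" if y: "y \<in> carrier G" for y
    proof -
      have "a \<otimes> (inv g \<otimes> y \<otimes> g) \<otimes> inv a \<otimes> inv (inv g \<otimes> y \<otimes> g) \<in> ?N" using a y g by auto
      then have "g \<otimes> (a \<otimes> (inv g \<otimes> y \<otimes> g) \<otimes> inv a \<otimes> inv (inv g \<otimes> y \<otimes> g)) \<otimes> inv g \<in> ?N"
        using g N.inv_op_closed2 by simp
      moreover have "g \<otimes> (a \<otimes> (inv g \<otimes> y \<otimes> g) \<otimes> inv a \<otimes> inv (inv g \<otimes> y \<otimes> g)) \<otimes> inv g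
          = g \<otimes> a \<otimes> inv g \<otimes> y \<otimes> inv (g \<otimes> a \<otimes> inv g) \<otimes> inv y"
        using a g y by (simp add: inv_mult_group m_assoc inv_mult_cancel_left mult_inv_cancel_left)
      ultimately show ?thesis by simp
    qed
    then show "g \<otimes> a \<otimes> inv g \<in> upper_central G (Suc i)" using a g by auto
  qed
qed

lemma (in group) coprime_commutator_upper_central_Suc:
  assumes x: "x \<in> carrier G" and y: "y \<in> carrier G"
    and xm: "x [^] (m::nat) = \<one>" and yn: "y [^] (n::nat) = \<one>" and "coprime m n"
    and c: "x \<otimes> y \<otimes> inv x \<otimes> inv y \<in> upper_central G (Suc i)"
  shows "x \<otimes> y \<otimes> inv x \<otimes> inv y \<in> upper_central G i"
proof -
  let ?N = "upper_central G i" and ?c = "x \<otimes> y \<otimes> inv x \<otimes> inv y"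
  interpret N: normal ?N G by (rule normal_upper_central)
  interpret Q: group "G Mod ?N" by (rule N.factorgroup_is_group)
  interpret \<pi>: group_hom G "G Mod ?N" "\<lambda>a. ?N #> a"
    by unfold_locales (rule N.r_coset_hom_Mod)
  let ?\<pi> = "\<lambda>a. ?N #> a"
  have \<pi>_commutator: "?\<pi> (a \<otimes> b \<otimes> inv a \<otimes> inv b) =
      ?\<pi> a \<otimes>\<^bsub>G Mod ?N\<^esub> ?\<pi> b \<otimes>\<^bsub>G Mod ?N\<^esub> inv\<^bsub>G Mod ?N\<^esub> ?\<pi> a \<otimes>\<^bsub>G Mod ?N\<^esub> inv\<^bsub>G Mod ?N\<^esub> ?\<pi> b"
    if "a \<in> carrier G" "b \<in> carrier G" for a b
    using that by (simp only: \<pi>.hom_mult \<pi>.hom_inv m_closed inv_closed)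
  have "?\<pi> ?c \<otimes>\<^bsub>G Mod ?N\<^esub> g = g \<otimes>\<^bsub>G Mod ?N\<^esub> ?\<pi> ?c" if "g \<in> carrier (G Mod ?N)" for g
  proof -
    obtain a where a: "a \<in> carrier G" and ga: "g = ?\<pi> a"
      using \<open>g \<in> carrier (G Mod ?N)\<close> by (auto simp: carrier_FactGroup)
    have "?c \<otimes> a \<otimes> inv ?c \<otimes> inv a \<in> ?N" using c a by auto
    then have "?\<pi> (?c \<otimes> a \<otimes> inv ?c \<otimes> inv a) = \<one>\<^bsub>G Mod ?N\<^esub>"
      by (simp add: N.rcos_const one_FactGroup)
    then show ?thesis unfolding ga using x y a
      by (intro Q.commute_of_commutator_eq_one) (simp_all add: \<pi>_commutator del: mult_FactGroup)
  qed
  then have "?\<pi> x \<otimes>\<^bsub>G Mod ?N\<^esub> ?\<pi> y \<otimes>\<^bsub>G Mod ?N\<^esub> inv\<^bsub>G Mod ?N\<^esub> ?\<pi> x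
      \<otimes>\<^bsub>G Mod ?N\<^esub> inv\<^bsub>G Mod ?N\<^esub> ?\<pi> y = \<one>\<^bsub>G Mod ?N\<^esub>"
    using x y xm yn \<open>coprime m n\<close>
    by (intro Q.central_commutator_eq_one[of _ _ m n])
       (simp_all add: \<pi>_commutator \<pi>.hom_nat_pow[symmetric] del: mult_FactGroup)
  then have "?N #> ?c = ?N" using x y by (simp add: \<pi>_commutator one_FactGroup del: mult_FactGroup)
  then show ?thesis using coset_join1 x y N.subgroup_axioms by blast
qed

lemma (in group) nilpotent_coprime_pow_commute:
  assumes "nilpotent_group G" and x: "x \<in> carrier G" and y: "y \<in> carrier G"
    and "x [^] (m::nat) = \<one>" and "y [^] (n::nat) = \<one>" and "coprime m n"
  shows "x \<otimes> y = y \<otimes> x"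
proof -
  obtain k where k: "upper_central G k = carrier G"
    using assms(1) by (auto simp: nilpotent_group_def)
  have "x \<otimes> y \<otimes> inv x \<otimes> inv y \<in> upper_central G 0"
    if "x \<otimes> y \<otimes> inv x \<otimes> inv y \<in> upper_central G j" for j
    using that by (induction j) (use assms coprime_commutator_upper_central_Suc in blast)+
  from this[of k] show ?thesis using k x y by (intro commute_of_commutator_eq_one) auto
qed

abbreviation noncentral :: "('a, 'b) monoid_scheme \<Rightarrow> 'a set" where
  "noncentral G \<equiv> carrier G - center G"

definition centralizer :: "('a, 'b) monoid_scheme \<Rightarrow> 'a set \<Rightarrow> 'a set" where
  "centralizer G S = {h \<in> carrier G. \<forall>s \<in> S. h \<otimes>\<^bsub>G\<^esub> s = s \<otimes>\<^bsub>G\<^esub> h}"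

lemma centralizer_empty [simp]: "centralizer G {} = carrier G"
  by (simp add: centralizer_def)

lemma centralizer_pair: "centralizer G {a, b} = centralizer G {a} \<inter> centralizer G {b}"
  by (auto simp: centralizer_def)

lemma (in group) subgroup_centralizer:
  assumes "S \<subseteq> carrier G"
  shows "subgroup (centralizer G S) G"
proof (rule subgroupI)
  fix a assume a: "a \<in> centralizer G S"
  have a': "a \<in> carrier G" using a by (simp add: centralizer_def)
  have "inv a \<otimes> s = s \<otimes> inv a" if "s \<in> S" for s
  proof -
    have s: "s \<in> carrier G" and as: "a \<otimes> s = s \<otimes> a"
      using a \<open>s \<in> S\<close> assms by (auto simp: centralizer_def)
    have "inv a \<otimes> s = inv a \<otimes> (s \<otimes> a) \<otimes> inv a" using a' s by (simp add: m_assoc)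
    also have "\<dots> = s \<otimes> inv a" using a' s by (simp add: as[symmetric] m_assoc inv_mult_cancel_left)
    finally show ?thesis .
  qed
  then show "inv a \<in> centralizer G S" using a by (simp add: centralizer_def)
next
  fix a b assume "a \<in> centralizer G S" "b \<in> centralizer G S"
  then show "a \<otimes> b \<in> centralizer G S"
    using assms by (auto simp: centralizer_def m_assoc) (metis m_assoc subsetD)
qed (use assms in \<open>auto simp: centralizer_def intro!: exI[of _ \<one>]\<close>)

lemma (in group) center_subset_centralizer:
  "S \<subseteq> carrier G \<Longrightarrow> center G \<subseteq> centralizer G S"
  by (auto simp: center_def centralizer_def)

lemma (in group) centralizer_noncentral_psubset:
  "x \<in> noncentral G \<Longrightarrow> centralizer G {x} \<subset> carrier G"
  by (force simp: center_def centralizer_def)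

lemma (in group) pow_card_subgroup_eq_one:
  assumes "subgroup P G" "x \<in> P"
  shows "x [^] card P = \<one>"
proof -
  interpret P: group "G\<lparr>carrier := P\<rparr>"
    by (rule subgroup.subgroup_is_group[OF assms(1) is_group])
  have "x [^]\<^bsub>G\<lparr>carrier := P\<rparr>\<^esub> order (G\<lparr>carrier := P\<rparr>) = \<one>\<^bsub>G\<lparr>carrier := P\<rparr>\<^esub>"
    using assms(2) by (intro P.pow_order_eq_1) simp
  then show ?thesis by (simp add: order_def nat_pow_consistent[symmetric])
qed

lemma (in group) coprime_pow_factorization:
  assumes g: "g \<in> carrier G" and "g [^] (m * n :: nat) = \<one>" and "coprime m n"
  obtains a b where "a \<in> carrier G" "b \<in> carrier G" "g = a \<otimes> b"
    and "a [^] n = \<one>" and "b [^] m = \<one>"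
proof (cases "m = 0")
  case True
  then show ?thesis using that[of \<one> g] g \<open>coprime m n\<close> by (simp add: nat_dvd_1_iff_1)
next
  case False
  obtain s t where "m * s = n * t + gcd m n" using bezout_nat[OF False] by blast
  then have st: "m * s = Suc (n * t)" using \<open>coprime m n\<close> by simp
  let ?a = "g [^] (m * s)" and ?b = "inv (g [^] (n * t))"
  have "?a = g \<otimes> g [^] (n * t)" by (simp only: st nat_pow_Suc2[OF g])
  then have "g = ?a \<otimes> ?b" using g by (simp add: m_assoc)
  moreover have "?a [^] n = (g [^] (m * n)) [^] s" using g by (simp add: nat_pow_pow ac_simps)
  moreover have "?b [^] m = inv ((g [^] (m * n)) [^] t)" using g by (simp add: nat_pow_pow nat_pow_inv ac_simps)
  ultimately show ?thesis using g assms(2) by (intro that[of ?a ?b]) simp_all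
qed

lemma sylow_subgroup_coprime_index:
  assumes "group G" "finite (carrier G)" "sylow_subgroup G p P"
  obtains M where "card P * M = order G" and "coprime (card P) M"
proof -
  have p: "Factorial_Ring.prime p" and P: "card P = p ^ multiplicity p (order G)"
    using assms(3) by (auto simp: sylow_subgroup_def)
  have "order G \<noteq> 0"
    using assms(1,2) group.is_monoid monoid.order_gt_0_iff_finite by fastforce
  moreover have "\<not> is_unit p" using p not_prime_unit by blast
  ultimately obtain M where "order G = card P * M" "\<not> p dvd M"
    using multiplicity_decompose' P by metis
  then show ?thesis using p P by (intro that[of M]) (simp_all add: prime_imp_coprime)
qed

lemma (in group) card_fibre_subgroup_product:
  assumes K1: "subgroup K1 G" and K2: "subgroup K2 G" and a0: "a0 \<in> K1" and b0: "b0 \<in> K2"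
  shows "card {(a, b) \<in> K1 \<times> K2. a \<otimes> b = a0 \<otimes> b0} = card (K1 \<inter> K2)"
proof -
  interpret K1: subgroup K1 G by (rule K1)
  interpret K2: subgroup K2 G by (rule K2)
  have a0G: "a0 \<in> carrier G" and b0G: "b0 \<in> carrier G" using a0 b0 by auto
  have "bij_betw (\<lambda>k. (a0 \<otimes> k, inv k \<otimes> b0)) (K1 \<inter> K2) {(a, b) \<in> K1 \<times> K2. a \<otimes> b = a0 \<otimes> b0}"
  proof (rule bij_betw_byWitness[where f' = "\<lambda>(a, b). inv a0 \<otimes> a"])
    show "\<forall>k \<in> K1 \<inter> K2. (\<lambda>(a, b). inv a0 \<otimes> a) (a0 \<otimes> k, inv k \<otimes> b0) = k"
      using a0G by (auto simp: inv_mult_cancel_left)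
    show "(\<lambda>k. (a0 \<otimes> k, inv k \<otimes> b0)) ` (K1 \<inter> K2) \<subseteq> {(a, b) \<in> K1 \<times> K2. a \<otimes> b = a0 \<otimes> b0}"
      using a0 b0 a0G b0G by (auto simp: m_assoc mult_inv_cancel_left)
    have "inv a0 \<otimes> a = b0 \<otimes> inv b \<and> a0 \<otimes> (inv a0 \<otimes> a) = a \<and> inv (inv a0 \<otimes> a) \<otimes> b0 = b"
      if "a \<in> K1" "b \<in> K2" "a \<otimes> b = a0 \<otimes> b0" for a b
    proof -
      have aG: "a \<in> carrier G" and bG: "b \<in> carrier G" using that by auto
      have "inv a0 \<otimes> a = inv a0 \<otimes> (a \<otimes> b) \<otimes> inv b" using aG bG a0G by (simp add: m_assoc)
      also have "\<dots> = b0 \<otimes> inv b" using that aG bG a0G b0G by (simp add: m_assoc inv_mult_cancel_left)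
      finally have k: "inv a0 \<otimes> a = b0 \<otimes> inv b" .
      moreover have "a0 \<otimes> (inv a0 \<otimes> a) = a" using aG a0G by (simp add: mult_inv_cancel_left)
      moreover have "inv (inv a0 \<otimes> a) \<otimes> b0 = b"
        unfolding k using bG b0G by (simp add: inv_mult_group m_assoc)
      ultimately show ?thesis by blast
    qed
    then show "\<forall>z \<in> {(a, b) \<in> K1 \<times> K2. a \<otimes> b = a0 \<otimes> b0}.
        (\<lambda>k. (a0 \<otimes> k, inv k \<otimes> b0)) ((\<lambda>(a, b). inv a0 \<otimes> a) z) = z"
      and "(\<lambda>(a, b). inv a0 \<otimes> a) ` {(a, b) \<in> K1 \<times> K2. a \<otimes> b = a0 \<otimes> b0} \<subseteq> K1 \<inter> K2"
      using a0 b0 by auto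
  qed
  then show ?thesis by (simp add: bij_betw_same_card)
qed

lemma (in group) card_set_mult_subgroups:
  assumes K1: "subgroup K1 G" and K2: "subgroup K2 G" and fin: "finite (carrier G)"
  shows "card K1 * card K2 = card (K1 \<inter> K2) * card (K1 <#> K2)"
proof -
  let ?mult = "\<lambda>(a, b). a \<otimes> b"
  have prod: "K1 <#> K2 = ?mult ` (K1 \<times> K2)" by (auto simp: set_mult_def)
  have fin_prod: "finite (K1 \<times> K2)"
    using fin K1 K2 subgroup.subset finite_subset by (metis finite_SigmaI)
  have "card (K1 \<times> K2) = (\<Sum>y \<in> ?mult ` (K1 \<times> K2). card {z \<in> K1 \<times> K2. ?mult z = y})"
    using sum.image_gen[OF fin_prod, of "\<lambda>_. 1::nat" ?mult] by simp
  also have "\<dots> = (\<Sum>y \<in> ?mult ` (K1 \<times> K2). card (K1 \<inter> K2))"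
  proof (rule sum.cong[OF refl])
    fix y assume "y \<in> ?mult ` (K1 \<times> K2)"
    then obtain a0 b0 where "a0 \<in> K1" "b0 \<in> K2" "y = a0 \<otimes> b0" by auto
    moreover have "{z \<in> K1 \<times> K2. ?mult z = a0 \<otimes> b0} = {(a, b) \<in> K1 \<times> K2. a \<otimes> b = a0 \<otimes> b0}"
      by auto
    ultimately show "card {z \<in> K1 \<times> K2. ?mult z = y} = card (K1 \<inter> K2)"
      using card_fibre_subgroup_product[OF K1 K2] by simp
  qed
  finally show ?thesis by (simp add: prod card_cartesian_product)
qed

lemma (in group) card_centralizer_pair_le:
  assumes "finite (carrier G)" "a \<in> carrier G" "b \<in> carrier G"
  shows "card (centralizer G {a}) * card (centralizer G {b})
      \<le> card (centralizer G {a, b}) * card (carrier G)"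
proof -
  have "centralizer G {a} <#> centralizer G {b} \<subseteq> carrier G"
    by (auto simp: set_mult_def centralizer_def)
  then show ?thesis
    using card_set_mult_subgroups[OF subgroup_centralizer subgroup_centralizer] assms
    by (simp add: centralizer_pair card_mono)
qed

lemma (in group) card_centralizer_pair_eq:
  assumes "finite (carrier G)" "a \<in> carrier G" "b \<in> carrier G"
    and "centralizer G {a} <#> centralizer G {b} = carrier G"
  shows "card (centralizer G {a}) * card (centralizer G {b})
      = card (centralizer G {a, b}) * card (carrier G)"
  using card_set_mult_subgroups[OF subgroup_centralizer subgroup_centralizer] assms
  by (simp add: centralizer_pair)

lemma (in group) nilpotent_centralizers_product:
  assumes nil: "nilpotent_group G" and fin: "finite (carrier G)"
    and P: "sylow_subgroup G p P" and Q: "sylow_subgroup G q Q" and "p \<noteq> q"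
    and "x \<in> P" and "u \<in> Q"
  shows "centralizer G {x} <#> centralizer G {u} = carrier G"
proof
  have subP: "subgroup P G" and subQ: "subgroup Q G"
    using P Q by (auto simp: sylow_subgroup_def)
  then have x: "x \<in> carrier G" and u: "u \<in> carrier G"
    using \<open>x \<in> P\<close> \<open>u \<in> Q\<close> subgroup.subset by blast+
  obtain M where PM: "card P * M = order G" and coprime_PM: "coprime (card P) M"
    using sylow_subgroup_coprime_index[OF is_group fin P] .
  have "coprime (card Q) (card P)"
    using P Q \<open>p \<noteq> q\<close> by (simp add: sylow_subgroup_def primes_coprime)
  show "carrier G \<subseteq> centralizer G {x} <#> centralizer G {u}"
  proof
    fix g assume g: "g \<in> carrier G"
    have "g [^] (card P * M) = \<one>" using g PM pow_order_eq_1 by simp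
    then obtain a b where ab: "a \<in> carrier G" "b \<in> carrier G" "g = a \<otimes> b"
      and "a [^] M = \<one>" and "b [^] card P = \<one>"
      using coprime_pow_factorization[OF g _ coprime_PM] by blast
    have "x \<otimes> a = a \<otimes> x"
      using nilpotent_coprime_pow_commute[OF nil x \<open>a \<in> carrier G\<close>] coprime_PM \<open>a [^] M = \<one>\<close>
        pow_card_subgroup_eq_one[OF subP \<open>x \<in> P\<close>] by blast
    moreover have "u \<otimes> b = b \<otimes> u"
      using nilpotent_coprime_pow_commute[OF nil u \<open>b \<in> carrier G\<close>] \<open>coprime (card Q) (card P)\<close>
        \<open>b [^] card P = \<one>\<close> pow_card_subgroup_eq_one[OF subQ \<open>u \<in> Q\<close>] by blast
    ultimately have "a \<in> centralizer G {x}" "b \<in> centralizer G {u}"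
      using ab by (auto simp: centralizer_def)
    then show "g \<in> centralizer G {x} <#> centralizer G {u}"
      using ab unfolding set_mult_def by blast
  qed
qed (auto simp: set_mult_def centralizer_def)

lemma non_abelian_set_noncentral:
  assumes "non_abelian_set G S" "S \<subseteq> carrier G"
  obtains x where "x \<in> S" "x \<in> noncentral G"
  using assms by (force simp: non_abelian_set_def center_def)

lemma (in group) finite_carrier_of_finite_noncentral:
  assumes fin: "finite (noncentral G)" and h: "h \<in> noncentral G"
  shows "finite (carrier G)"
proof -
  have hG: "h \<in> carrier G" using h by simp
  have "h \<otimes> z \<notin> center G" if z: "z \<in> center G" for z
  proof
    assume hz: "h \<otimes> z \<in> center G"
    have zG: "z \<in> carrier G" using z by (simp add: center_def)
    have "h \<otimes> k = k \<otimes> h" if k: "k \<in> carrier G" for k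
    proof -
      have "h \<otimes> k \<otimes> z = h \<otimes> z \<otimes> k" using z k hG zG by (simp add: center_def m_assoc)
      also have "\<dots> = k \<otimes> h \<otimes> z" using hz k hG zG by (simp add: center_def m_assoc)
      finally show ?thesis using k hG zG by simp
    qed
    then show False using h by (simp add: center_def)
  qed
  then have "(\<lambda>z. h \<otimes> z) ` center G \<subseteq> noncentral G" using hG by (auto simp: center_def)
  moreover have "inj_on (\<lambda>z. h \<otimes> z) (center G)"
    using hG by (auto intro!: inj_onI simp: center_def)
  ultimately have "finite (center G)" using fin finite_subset finite_imageD by blast
  moreover have "carrier G \<subseteq> center G \<union> noncentral G" by blast
  ultimately show ?thesis using fin finite_subset by blast
qed

definition nc_graph_iso_map :: "('a \<Rightarrow> 'c) \<Rightarrow> ('a, 'b) monoid_scheme \<Rightarrow> ('c, 'd) monoid_scheme \<Rightarrow> bool" where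
  "nc_graph_iso_map f G H \<longleftrightarrow> bij_betw f (noncentral G) (noncentral H) \<and>
     (\<forall>x \<in> noncentral G. \<forall>y \<in> noncentral G. nc_adj G x y \<longleftrightarrow> nc_adj H (f x) (f y))"

lemma nc_graph_iso_iff: "nc_graph_iso G H \<longleftrightarrow> (\<exists>f. nc_graph_iso_map f G H)"
  by (simp add: nc_graph_iso_def nc_graph_iso_map_def)

lemma noncentral_commute_iff_not_adj:
  "v \<in> noncentral G \<Longrightarrow> s \<in> noncentral G \<Longrightarrow>
     v \<otimes>\<^bsub>G\<^esub> s = s \<otimes>\<^bsub>G\<^esub> v \<longleftrightarrow> v = s \<or> \<not> nc_adj G s v"
  by (auto simp: nc_adj_def)

lemma nc_graph_iso_map_centralizer:
  assumes f: "nc_graph_iso_map f G H" and S: "S \<subseteq> noncentral G"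
  shows "f ` (centralizer G S - center G) = centralizer H (f ` S) - center H"
proof -
  have inj: "inj_on f (noncentral G)" and img: "f ` noncentral G = noncentral H"
    using f by (auto simp: nc_graph_iso_map_def bij_betw_def)
  have adj: "nc_adj G s v \<longleftrightarrow> nc_adj H (f s) (f v)" if "s \<in> noncentral G" "v \<in> noncentral G" for s v
    using f that by (simp add: nc_graph_iso_map_def)
  have "v \<in> centralizer G S \<longleftrightarrow> f v \<in> centralizer H (f ` S)" if v: "v \<in> noncentral G" for v
  proof -
    have fv: "f v \<in> noncentral H" using v img by blast
    have "v \<in> centralizer G S \<longleftrightarrow> (\<forall>s \<in> S. v \<otimes>\<^bsub>G\<^esub> s = s \<otimes>\<^bsub>G\<^esub> v)"
      using v by (simp add: centralizer_def)
    also have "\<dots> \<longleftrightarrow> (\<forall>s \<in> S. v = s \<or> \<not> nc_adj G s v)"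
      using S noncentral_commute_iff_not_adj[OF v] by blast
    also have "\<dots> \<longleftrightarrow> (\<forall>s \<in> S. f v = f s \<or> \<not> nc_adj H (f s) (f v))"
      using v S adj inj_on_eq_iff[OF inj v] by blast
    also have "\<dots> \<longleftrightarrow> (\<forall>s \<in> f ` S. f v \<otimes>\<^bsub>H\<^esub> s = s \<otimes>\<^bsub>H\<^esub> f v)"
      using S img noncentral_commute_iff_not_adj[OF fv] by blast
    also have "\<dots> \<longleftrightarrow> f v \<in> centralizer H (f ` S)"
      using fv by (simp add: centralizer_def)
    finally show ?thesis .
  qed
  note centralizer_iff = this
  show ?thesis
  proof (intro equalityI subsetI)
    fix w assume "w \<in> f ` (centralizer G S - center G)"
    then obtain v where "v \<in> centralizer G S" "v \<notin> center G" "w = f v" by blast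
    moreover then have "v \<in> noncentral G" by (simp add: centralizer_def)
    ultimately show "w \<in> centralizer H (f ` S) - center H"
      using centralizer_iff img by blast
  next
    fix w assume w: "w \<in> centralizer H (f ` S) - center H"
    then have "w \<in> f ` noncentral G" using img by (auto simp: centralizer_def)
    then obtain v where "v \<in> noncentral G" "w = f v" by blast
    then show "w \<in> f ` (centralizer G S - center G)" using centralizer_iff w by blast
  qed
qed

lemma (in group) card_centralizer_split:
  assumes "finite (carrier G)" "S \<subseteq> carrier G"
  shows "card (centralizer G S) = card (center G) + card (centralizer G S - center G)"
proof -
  have "finite (centralizer G S)" using assms(1) by (simp add: centralizer_def)
  moreover note center_subset_centralizer[OF assms(2)]
  ultimately have "card (center G) \<le> card (centralizer G S)"
    and "card (centralizer G S - center G) = card (centralizer G S) - card (center G)"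
    by (simp_all add: card_mono card_Diff_subset finite_subset)
  then show ?thesis by simp
qed

lemma nc_graph_iso_map_card_centralizer:
  assumes "group G" "group H" "finite (carrier G)" "finite (carrier H)"
    and f: "nc_graph_iso_map f G H" and S: "S \<subseteq> noncentral G"
  shows "card (centralizer H (f ` S)) + card (center G) = card (centralizer G S) + card (center H)"
proof -
  have "inj_on f (centralizer G S - center G)"
    using f by (auto simp: nc_graph_iso_map_def bij_betw_def centralizer_def intro: inj_on_subset)
  then have "card (centralizer H (f ` S) - center H) = card (centralizer G S - center G)"
    by (simp add: nc_graph_iso_map_centralizer[OF f S, symmetric] card_image)
  moreover have "f ` S \<subseteq> carrier H" using f S by (auto simp: nc_graph_iso_map_def bij_betw_def)
  moreover have "S \<subseteq> carrier G" using S by blast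
  ultimately show ?thesis
    using group.card_centralizer_split[OF assms(1,3), of S] group.card_centralizer_split[OF assms(2,4), of "f ` S"]
    by linarith
qed

lemma int_le_zero_of_shifted_product_le:
  fixes a b c n d :: int
  assumes "0 \<le> a" "a < n" "b < n" "a * b = c * n" and "(a - d) * (b - d) \<le> (c - d) * (n - d)"
  shows "d \<le> 0"
proof -
  have "n * (c + n - a - b) = (n - a) * (n - b)" using assms(4) by (simp add: algebra_simps)
  also have "\<dots> > 0" using assms(2,3) by simp
  finally have "c + n - a - b > 0" using assms(1,2) by (simp add: zero_less_mult_iff)
  moreover have "d * (c + n - a - b) \<le> 0" using assms(4,5) by (simp add: algebra_simps)
  ultimately show ?thesis by (simp add: mult_le_0_iff)
qed

lemma nc_graph_iso_map_card_eq:
  assumes G: "group G" and H: "group H" and fin: "finite (carrier G)" and "non_abelian H"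
    and f: "nc_graph_iso_map f G H" and centers: "card (center H) \<le> card (center G)"
    and x: "x \<in> noncentral G" and u: "u \<in> noncentral G"
    and product: "centralizer G {x} <#>\<^bsub>G\<^esub> centralizer G {u} = carrier G"
  shows "card (carrier G) = card (carrier H)"
proof -
  interpret G: group G by (rule G)
  interpret H: group H by (rule H)
  obtain h where "h \<in> noncentral H"
    using non_abelian_set_noncentral[OF \<open>non_abelian H\<close>] by blast
  moreover have "finite (noncentral H)"
    using f fin bij_betw_finite by (auto simp: nc_graph_iso_map_def)
  ultimately have finH: "finite (carrier H)" by (intro H.finite_carrier_of_finite_noncentral)
  define d where "d = int (card (center G)) - int (card (center H))"
  have shift: "int (card (centralizer H (f ` S))) = int (card (centralizer G S)) - d"
    if "S \<subseteq> noncentral G" for S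
    using nc_graph_iso_map_card_centralizer[OF G H fin finH f that] by (simp add: d_def)
  have "f x \<in> carrier H" "f u \<in> carrier H"
    using f x u by (auto simp: nc_graph_iso_map_def bij_betw_def)
  then have "card (centralizer H {f x}) * card (centralizer H {f u})
      \<le> card (centralizer H {f x, f u}) * card (carrier H)"
    by (rule H.card_centralizer_pair_le[OF finH])
  then have "int (card (centralizer H {f x})) * int (card (centralizer H {f u}))
      \<le> int (card (centralizer H {f x, f u})) * int (card (carrier H))"
    by (simp only: of_nat_mult[symmetric] of_nat_le_iff)
  then have "(int (card (centralizer G {x})) - d) * (int (card (centralizer G {u})) - d)
      \<le> (int (card (centralizer G {x, u})) - d) * (int (card (carrier G)) - d)"
    using shift[of "{x}"] shift[of "{u}"] shift[of "{x, u}"] shift[of "{}"] x u by simp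
  moreover have "card (centralizer G {x}) * card (centralizer G {u})
      = card (centralizer G {x, u}) * card (carrier G)"
    using G.card_centralizer_pair_eq[OF fin _ _ product] x u by blast
  moreover have "card (centralizer G {x}) < card (carrier G)" "card (centralizer G {u}) < card (carrier G)"
    using G.centralizer_noncentral_psubset x u fin psubset_card_mono by blast+
  ultimately have "d \<le> 0"
    by (intro int_le_zero_of_shifted_product_le) (simp_all flip: of_nat_mult)
  then show ?thesis using shift[of "{}"] centers by (simp add: d_def)
qed

theorem theorem2p4:
  fixes G :: "('a, 'b) monoid_scheme" and H :: "('c, 'd) monoid_scheme"
  assumes "group G" and "finite (carrier G)" and "nilpotent_group G"
    and "\<exists>p q P Q. p \<noteq> q \<and> sylow_subgroup G p P \<and> sylow_subgroup G q Q
                  \<and> non_abelian_set G P \<and> non_abelian_set G Q"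
    and "group H" and "non_abelian H"
    and "card (center G) \<ge> card (center H)"
    and "nc_graph_iso G H"
  shows "card (carrier G) = card (carrier H)"
proof -
  interpret G: group G by fact
  obtain p q P Q where "p \<noteq> q" and P: "sylow_subgroup G p P" and Q: "sylow_subgroup G q Q"
    and "non_abelian_set G P" and "non_abelian_set G Q"
    using assms(4) by blast
  moreover have "P \<subseteq> carrier G" "Q \<subseteq> carrier G"
    using P Q subgroup.subset by (auto simp: sylow_subgroup_def)
  ultimately obtain x u where "x \<in> P" "x \<in> noncentral G" "u \<in> Q" "u \<in> noncentral G"
    using non_abelian_set_noncentral by metis
  then have "centralizer G {x} <#>\<^bsub>G\<^esub> centralizer G {u} = carrier G"
    using G.nilpotent_centralizers_product[OF assms(3,2) P Q \<open>p \<noteq> q\<close>] by blast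
  moreover obtain f where "nc_graph_iso_map f G H"
    using assms(8) nc_graph_iso_iff by blast
  ultimately show ?thesis
    using nc_graph_iso_map_card_eq[OF assms(1,5,2,6) _ assms(7) \<open>x \<in> noncentral G\<close> \<open>u \<in> noncentral G\<close>]
    by blast
qed

end
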